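(* If the random vector $(X_1,\dots,X_n)$ is exchangeable, then $(-X_1,X_2,\dots,X_n)$ is SIAMX* and SIAMN*.
   Context: Exchangeable means the distribution is invariant under all permutations of coordinates. For random variables $U,V$, $U\le_{\mathrm{st}}V$ means $F_U(x)\ge F_V(x)$ for all $x$ ($F$ the cdf). A random vector $(Y_1,\dots,Y_n)$ is SIAMX* if $|Y_1|\overset{d}{=}|\max(Y_1,Y_2)|$ and $|\max(Y_1,\dots,Y_{l-1})|\le_{\mathrm{st}}|\max(Y_1,\dots,Y_l)|$ for $l=3,\dots,n$; SIAMN* is the same with $\max$ replaced by $\min$. *)

theory Defs
  imports "HOL-Probability.Probability"
begin

text \<open>Random vectors are indexed by {1..n}: component i is X i :: 'a => real on the
probability space M. The joint law is the pushforward to the product space.\<close>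

definition joint_law :: "'a measure \<Rightarrow> nat \<Rightarrow> (nat \<Rightarrow> 'a \<Rightarrow> real) \<Rightarrow> (nat \<Rightarrow> real) measure" where
  "joint_law M n X = distr M (PiM {1..n} (\<lambda>_. borel)) (\<lambda>\<omega>. \<lambda>i\<in>{1..n}. X i \<omega>)"

definition exchangeable :: "'a measure \<Rightarrow> nat \<Rightarrow> (nat \<Rightarrow> 'a \<Rightarrow> real) \<Rightarrow> bool" where
  "exchangeable M n X \<longleftrightarrow>
     (\<forall>\<pi>. \<pi> permutes {1..n} \<longrightarrow> joint_law M n (\<lambda>i. X (\<pi> i)) = joint_law M n X)"

definition eq_dist :: "'a measure \<Rightarrow> ('a \<Rightarrow> real) \<Rightarrow> ('a \<Rightarrow> real) \<Rightarrow> bool" where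
  "eq_dist M U V \<longleftrightarrow> distr M borel U = distr M borel V"

definition st_le :: "'a measure \<Rightarrow> ('a \<Rightarrow> real) \<Rightarrow> ('a \<Rightarrow> real) \<Rightarrow> bool" where
  "st_le M U V \<longleftrightarrow>
     (\<forall>x. measure M {\<omega>\<in>space M. V \<omega> \<le> x} \<le> measure M {\<omega>\<in>space M. U \<omega> \<le> x})"

definition max_upto :: "(nat \<Rightarrow> 'a \<Rightarrow> real) \<Rightarrow> nat \<Rightarrow> 'a \<Rightarrow> real" where
  "max_upto Y l \<omega> = Max ((\<lambda>i. Y i \<omega>) ` {1..l})"

definition min_upto :: "(nat \<Rightarrow> 'a \<Rightarrow> real) \<Rightarrow> nat \<Rightarrow> 'a \<Rightarrow> real" where
  "min_upto Y l \<omega> = Min ((\<lambda>i. Y i \<omega>) ` {1..l})"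

definition SIAMX :: "'a measure \<Rightarrow> nat \<Rightarrow> (nat \<Rightarrow> 'a \<Rightarrow> real) \<Rightarrow> bool" where
  "SIAMX M n Y \<longleftrightarrow>
     eq_dist M (\<lambda>\<omega>. \<bar>Y 1 \<omega>\<bar>) (\<lambda>\<omega>. \<bar>max (Y 1 \<omega>) (Y 2 \<omega>)\<bar>) \<and>
     (\<forall>l\<in>{3..n}. st_le M (\<lambda>\<omega>. \<bar>max_upto Y (l - 1) \<omega>\<bar>) (\<lambda>\<omega>. \<bar>max_upto Y l \<omega>\<bar>))"

definition SIAMN :: "'a measure \<Rightarrow> nat \<Rightarrow> (nat \<Rightarrow> 'a \<Rightarrow> real) \<Rightarrow> bool" where
  "SIAMN M n Y \<longleftrightarrow>
     eq_dist M (\<lambda>\<omega>. \<bar>Y 1 \<omega>\<bar>) (\<lambda>\<omega>. \<bar>min (Y 1 \<omega>) (Y 2 \<omega>)\<bar>) \<and>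
     (\<forall>l\<in>{3..n}. st_le M (\<lambda>\<omega>. \<bar>min_upto Y (l - 1) \<omega>\<bar>) (\<lambda>\<omega>. \<bar>min_upto Y l \<omega>\<bar>))"

end

theory Submission
  imports Defs
begin

(*
  Write Y = (-X 1, X 2, ..., X n) and m k = max (Y 1, ..., Y k). For x >= 0 the disjoint
  events {|m (k+1)| <= x} and {m k <= x < Y (k+1)} have the same union as the disjoint events
  {|m k| <= x} and {m k < -x <= Y (k+1)}. Exchanging X 1 and X (k+1), which does not change
  the joint law, maps the last event into {m k <= x < Y (k+1)}, onto it when k = 1. Hence
  P(|m (k+1)| <= x) <= P(|m k| <= x), with equality for k = 1. The statement for minima is
  the one for maxima applied to the exchangeable vector -X, since min Y = - max (-Y).
*)

lemma measurable_component_PiM_borel[measurable]: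
  "(\<lambda>f. f j) \<in> borel_measurable (PiM I (\<lambda>_. borel :: 'b::topological_space measure))"
proof (cases "j \<in> I")
  case True
  then show ?thesis by (rule measurable_component_singleton)
next
  case False
  have undef: "f j = undefined" if "f \<in> space (PiM I (\<lambda>_. borel :: 'b measure))" for f
    using that False unfolding space_PiM by (rule PiE_arb)
  show ?thesis
    by (rule measurable_cong[THEN iffD2, OF undef]) simp_all
qed

lemma joint_law_measurable:
  assumes "\<And>i. i \<in> {1..n} \<Longrightarrow> X i \<in> borel_measurable M"
  shows "(\<lambda>\<omega>. \<lambda>i\<in>{1..n}. X i \<omega>) \<in> M \<rightarrow>\<^sub>M PiM {1..n} (\<lambda>_. borel)"
  using assms by (rule measurable_restrict)

lemma measure_joint_law_Collect:
  assumes "\<And>i. i \<in> {1..n} \<Longrightarrow> X i \<in> borel_measurable M"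
    and "Q \<in> PiM {1..n} (\<lambda>_. borel) \<rightarrow>\<^sub>M count_space UNIV"
  shows "measure (joint_law M n X) {f \<in> space (PiM {1..n} (\<lambda>_. borel)). Q f}
       = measure M {\<omega> \<in> space M. Q (\<lambda>i\<in>{1..n}. X i \<omega>)}"
proof -
  have X_law: "(\<lambda>\<omega>. \<lambda>i\<in>{1..n}. X i \<omega>) \<in> M \<rightarrow>\<^sub>M PiM {1..n} (\<lambda>_. borel)"
    using assms(1) by (rule joint_law_measurable)
  have S: "{f \<in> space (PiM {1..n} (\<lambda>_. borel)). Q f} \<in> sets (PiM {1..n} (\<lambda>_. borel))"
    using assms(2) by (rule pred_def[THEN iffD1])
  have preimage: "(\<lambda>\<omega>. \<lambda>i\<in>{1..n}. X i \<omega>) -` {f \<in> space (PiM {1..n} (\<lambda>_. borel)). Q f} \<inter> space M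
      = {\<omega> \<in> space M. Q (\<lambda>i\<in>{1..n}. X i \<omega>)}"
    using measurable_space[OF X_law] by auto
  show ?thesis
    unfolding joint_law_def measure_distr[OF X_law S] preimage ..
qed

lemma exchangeable_measure_permute:
  assumes "exchangeable M n X" "\<pi> permutes {1..n}"
    and "\<And>i. i \<in> {1..n} \<Longrightarrow> X i \<in> borel_measurable M"
    and "Q \<in> PiM {1..n} (\<lambda>_. borel) \<rightarrow>\<^sub>M count_space UNIV"
  shows "measure M {\<omega> \<in> space M. Q (\<lambda>i\<in>{1..n}. X (\<pi> i) \<omega>)}
       = measure M {\<omega> \<in> space M. Q (\<lambda>i\<in>{1..n}. X i \<omega>)}"
proof -
  let ?S = "{f \<in> space (PiM {1..n} (\<lambda>_. borel)). Q f}"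
  have "X (\<pi> i) \<in> borel_measurable M" if "i \<in> {1..n}" for i
    using that assms(3) permutes_in_image[OF assms(2)] by blast
  then have "measure M {\<omega> \<in> space M. Q (\<lambda>i\<in>{1..n}. X (\<pi> i) \<omega>)}
      = measure (joint_law M n (\<lambda>i. X (\<pi> i))) ?S"
    by (rule measure_joint_law_Collect[symmetric, OF _ assms(4)])
  also have "joint_law M n (\<lambda>i. X (\<pi> i)) = joint_law M n X"
    using assms(1,2) unfolding exchangeable_def by blast
  also have "measure (joint_law M n X) ?S = measure M {\<omega> \<in> space M. Q (\<lambda>i\<in>{1..n}. X i \<omega>)}"
    by (rule measure_joint_law_Collect[OF assms(3,4)])
  finally show ?thesis .
qed

lemma joint_law_uminus:
  assumes "\<And>i. i \<in> {1..n} \<Longrightarrow> X i \<in> borel_measurable M"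
  shows "joint_law M n (\<lambda>i \<omega>. - X i \<omega>)
       = distr (joint_law M n X) (PiM {1..n} (\<lambda>_. borel)) (\<lambda>f. \<lambda>i\<in>{1..n}. - f i)"
proof -
  have neg: "(\<lambda>f. \<lambda>i\<in>{1..n}. - f i) \<in> PiM {1..n} (\<lambda>_. borel) \<rightarrow>\<^sub>M PiM {1..n} (\<lambda>_. borel :: real measure)"
    by (rule measurable_restrict) (rule borel_measurable_uminus, rule measurable_component_singleton)
  have X_law: "(\<lambda>\<omega>. \<lambda>i\<in>{1..n}. X i \<omega>) \<in> M \<rightarrow>\<^sub>M PiM {1..n} (\<lambda>_. borel)"
    using assms by (rule joint_law_measurable)
  have "(\<lambda>f. \<lambda>i\<in>{1..n}. - f i) \<circ> (\<lambda>\<omega>. \<lambda>i\<in>{1..n}. X i \<omega>) = (\<lambda>\<omega>. \<lambda>i\<in>{1..n}. - X i \<omega>)"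
    by (simp add: fun_eq_iff restrict_def)
  then show ?thesis
    unfolding joint_law_def distr_distr[OF neg X_law] by simp
qed

lemma exchangeable_uminus:
  assumes "exchangeable M n X" "\<And>i. i \<in> {1..n} \<Longrightarrow> X i \<in> borel_measurable M"
  shows "exchangeable M n (\<lambda>i \<omega>. - X i \<omega>)"
  unfolding exchangeable_def
proof (intro allI impI)
  fix \<pi> assume \<pi>: "\<pi> permutes {1..n}"
  then have "X (\<pi> i) \<in> borel_measurable M" if "i \<in> {1..n}" for i
    using that assms(2) permutes_in_image[OF \<pi>] by blast
  then have "joint_law M n (\<lambda>i \<omega>. - X (\<pi> i) \<omega>)
      = distr (joint_law M n (\<lambda>i. X (\<pi> i))) (PiM {1..n} (\<lambda>_. borel)) (\<lambda>f. \<lambda>i\<in>{1..n}. - f i)"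
    by (rule joint_law_uminus)
  also have "joint_law M n (\<lambda>i. X (\<pi> i)) = joint_law M n X"
    using assms(1) \<pi> unfolding exchangeable_def by blast
  also have "distr (joint_law M n X) (PiM {1..n} (\<lambda>_. borel)) (\<lambda>f. \<lambda>i\<in>{1..n}. - f i)
      = joint_law M n (\<lambda>i \<omega>. - X i \<omega>)"
    by (rule joint_law_uminus[symmetric, OF assms(2)])
  finally show "joint_law M n (\<lambda>i \<omega>. - X (\<pi> i) \<omega>) = joint_law M n (\<lambda>i \<omega>. - X i \<omega>)" .
qed

lemma (in prob_space) eq_dist_of_cdf:
  assumes "U \<in> borel_measurable M" "V \<in> borel_measurable M"
    and "\<And>x. measure M {\<omega> \<in> space M. U \<omega> \<le> x} = measure M {\<omega> \<in> space M. V \<omega> \<le> x}"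
  shows "eq_dist M U V"
  unfolding eq_dist_def
proof (rule cdf_unique)
  have cdf_distr: "cdf (distr M borel W) x = measure M {\<omega> \<in> space M. W \<omega> \<le> x}"
    if "W \<in> borel_measurable M" for W x
  proof -
    have "W -` {..x} \<inter> space M = {\<omega> \<in> space M. W \<omega> \<le> x}" by auto
    then show ?thesis unfolding cdf_def by (simp add: measure_distr[OF that])
  qed
  show "real_distribution (distr M borel U)" "real_distribution (distr M borel V)"
    using assms(1,2) by (simp_all add: real_distribution_distr)
  show "cdf (distr M borel U) = cdf (distr M borel V)"
    by (rule ext) (simp add: cdf_distr assms)
qed

lemma max_upto_measurable:
  "(\<And>i. i \<in> {1..l} \<Longrightarrow> Y i \<in> borel_measurable M) \<Longrightarrow> max_upto Y l \<in> borel_measurable M"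
  unfolding max_upto_def[abs_def] by (rule borel_measurable_Max) auto

lemma max_upto_1: "max_upto Y 1 \<omega> = Y 1 \<omega>"
  by (simp add: max_upto_def)

lemma max_upto_2: "max_upto Y 2 \<omega> = max (Y 1 \<omega>) (Y 2 \<omega>)"
proof -
  have "{1..2::nat} = {1, 2}"
    by auto
  then show ?thesis
    by (simp add: max_upto_def)
qed

lemma max_upto_Suc:
  "1 \<le> k \<Longrightarrow> max_upto Y (Suc k) \<omega> = max (max_upto Y k \<omega>) (Y (Suc k) \<omega>)"
  by (simp add: max_upto_def atLeastAtMostSuc_conv max.commute)

lemma min_upto_eq_uminus_max_upto:
  assumes "1 \<le> l"
  shows "min_upto Y l \<omega> = - max_upto (\<lambda>i \<omega>. - Y i \<omega>) l \<omega>"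
proof -
  let ?A = "(\<lambda>i. Y i \<omega>) ` {1..l}"
  have "max_upto (\<lambda>i \<omega>. - Y i \<omega>) l \<omega> = Max (uminus ` ?A)"
    by (simp add: max_upto_def image_image)
  also have "\<dots> = - Min ?A"
    by (subst minus_Min_eq_Max) (use assms in auto)
  finally show ?thesis
    by (simp add: min_upto_def)
qed

lemma SIAMN_iff_SIAMX_uminus: "SIAMN M n Y \<longleftrightarrow> SIAMX M n (\<lambda>i \<omega>. - Y i \<omega>)"
proof -
  have abs_first: "(\<lambda>\<omega>. \<bar>- Y 1 \<omega>\<bar>) = (\<lambda>\<omega>. \<bar>Y 1 \<omega>\<bar>)"
    and abs_max2: "(\<lambda>\<omega>. \<bar>max (- Y 1 \<omega>) (- Y 2 \<omega>)\<bar>) = (\<lambda>\<omega>. \<bar>min (Y 1 \<omega>) (Y 2 \<omega>)\<bar>)"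
    by (auto simp: fun_eq_iff max_def min_def)
  have abs_max_upto: "(\<lambda>\<omega>. \<bar>max_upto (\<lambda>i \<omega>. - Y i \<omega>) l \<omega>\<bar>) = (\<lambda>\<omega>. \<bar>min_upto Y l \<omega>\<bar>)"
    if "1 \<le> l" for l
    using that by (simp add: fun_eq_iff min_upto_eq_uminus_max_upto)
  show ?thesis
    unfolding SIAMN_def SIAMX_def abs_first abs_max2
    by (intro conj_cong ball_cong refl) (auto simp: abs_max_upto)
qed

lemma (in finite_measure) measure_abs_max_upto_Suc:
  assumes "1 \<le> k" "0 \<le> x" and Y_meas: "\<And>i. i \<in> {1..Suc k} \<Longrightarrow> Y i \<in> borel_measurable M"
  shows "measure M {\<omega> \<in> space M. \<bar>max_upto Y (Suc k) \<omega>\<bar> \<le> x}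
           + measure M {\<omega> \<in> space M. max_upto Y k \<omega> \<le> x \<and> x < Y (Suc k) \<omega>}
       = measure M {\<omega> \<in> space M. \<bar>max_upto Y k \<omega>\<bar> \<le> x}
           + measure M {\<omega> \<in> space M. max_upto Y k \<omega> < - x \<and> - x \<le> Y (Suc k) \<omega>}"
    (is "measure M ?A + measure M ?C = measure M ?B + measure M ?D")
proof -
  have [measurable]: "max_upto Y k \<in> borel_measurable M" "max_upto Y (Suc k) \<in> borel_measurable M"
    "Y (Suc k) \<in> borel_measurable M"
    using Y_meas by (auto intro: max_upto_measurable)
  have cross: "(\<bar>max m y\<bar> \<le> x \<or> m \<le> x \<and> x < y) \<longleftrightarrow> (\<bar>m\<bar> \<le> x \<or> m < - x \<and> - x \<le> y)" for m y :: real
    using assms(2) by linarith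
  have sets: "?A \<in> sets M" "?B \<in> sets M" "?C \<in> sets M" "?D \<in> sets M"
    by measurable
  have "?A \<union> ?C = ?B \<union> ?D"
    using cross by (auto simp: max_upto_Suc[OF assms(1)])
  moreover have "?A \<inter> ?C = {}" "?B \<inter> ?D = {}"
    by (auto simp: max_upto_Suc[OF assms(1)])
  ultimately show ?thesis
    using finite_measure_Union[OF sets(1,3)] finite_measure_Union[OF sets(2,4)] by simp
qed

definition negate_first :: "(nat \<Rightarrow> 'a \<Rightarrow> real) \<Rightarrow> nat \<Rightarrow> 'a \<Rightarrow> real" where
  "negate_first X = (\<lambda>i \<omega>. if i = 1 then - X 1 \<omega> else X i \<omega>)"

lemma negate_first_uminus:
  "negate_first (\<lambda>i \<omega>. - X i \<omega>) = (\<lambda>i \<omega>. - negate_first X i \<omega>)"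
  by (simp add: negate_first_def fun_eq_iff)

lemma negate_first_measurable:
  assumes "\<And>i. i \<in> {1..n} \<Longrightarrow> X i \<in> borel_measurable M" "i \<in> {1..n}"
  shows "negate_first X i \<in> borel_measurable M"
  using assms(1)[of 1] assms by (cases "i = 1") (auto simp: negate_first_def)

context
  fixes M :: "'a measure" and X :: "nat \<Rightarrow> 'a \<Rightarrow> real" and n :: nat
  assumes prob: "prob_space M"
    and X_meas: "\<And>i. i \<in> {1..n} \<Longrightarrow> X i \<in> borel_measurable M"
    and exch: "exchangeable M n X"
begin

lemma measure_negate_first_crossing_swap:
  assumes "1 \<le> k" "Suc k \<le> n"
  shows "measure M {\<omega> \<in> space M. max_upto (negate_first X) k \<omega> < - x \<and> - x \<le> negate_first X (Suc k) \<omega>}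
       = measure M {\<omega> \<in> space M. - x \<le> X 1 \<omega> \<and> (\<forall>i\<in>{2..k}. X i \<omega> < - x) \<and> x < X (Suc k) \<omega>}"
proof -
  define Q where "Q f \<longleftrightarrow> x < f 1 \<and> (\<forall>i\<in>{2..k}. f i < - x) \<and> - x \<le> f (Suc k)" for f :: "nat \<Rightarrow> real"
  let ?\<pi> = "Transposition.transpose 1 (Suc k)"
  have Q_meas: "Q \<in> PiM {1..n} (\<lambda>_. borel) \<rightarrow>\<^sub>M count_space UNIV"
    unfolding Q_def by measurable
  have \<pi>: "?\<pi> permutes {1..n}"
    using assms by (intro permutes_swap_id) auto
  have low: "{1..k} = insert 1 {2..k}" and mid: "\<And>i. i \<in> {2..k} \<Longrightarrow> i \<in> {1..n} \<and> i \<noteq> 1 \<and> i \<noteq> Suc k"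
    using assms by auto
  have "max_upto (negate_first X) k \<omega> < - x \<and> - x \<le> negate_first X (Suc k) \<omega>
      \<longleftrightarrow> Q (\<lambda>i\<in>{1..n}. X i \<omega>)" for \<omega>
    using assms mid by (auto simp: max_upto_def low negate_first_def Q_def)
  moreover have "Q (\<lambda>i\<in>{1..n}. X (?\<pi> i) \<omega>)
      \<longleftrightarrow> - x \<le> X 1 \<omega> \<and> (\<forall>i\<in>{2..k}. X i \<omega> < - x) \<and> x < X (Suc k) \<omega>" for \<omega>
    using assms mid by (auto simp: Q_def cong: ball_cong)
  ultimately show ?thesis
    using exchangeable_measure_permute[OF exch \<pi> X_meas Q_meas] by simp
qed

lemma measure_abs_max_upto_negate_first_Suc:
  assumes "1 \<le> k" "Suc k \<le> n" "0 \<le> x"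
  shows "measure M {\<omega> \<in> space M. \<bar>max_upto (negate_first X) (Suc k) \<omega>\<bar> \<le> x}
           + measure M {\<omega> \<in> space M. max_upto (negate_first X) k \<omega> \<le> x \<and> x < negate_first X (Suc k) \<omega>}
       = measure M {\<omega> \<in> space M. \<bar>max_upto (negate_first X) k \<omega>\<bar> \<le> x}
           + measure M {\<omega> \<in> space M. - x \<le> X 1 \<omega> \<and> (\<forall>i\<in>{2..k}. X i \<omega> < - x) \<and> x < X (Suc k) \<omega>}"
proof -
  interpret prob_space M by (rule prob)
  have Y_meas: "\<And>i. i \<in> {1..Suc k} \<Longrightarrow> negate_first X i \<in> borel_measurable M"
    using assms(2) by (intro negate_first_measurable[OF X_meas]) auto
  show ?thesis
    using measure_abs_max_upto_Suc[where Y = "negate_first X", OF assms(1,3) Y_meas]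
    unfolding measure_negate_first_crossing_swap[OF assms(1,2)] .
qed

lemma measure_abs_max_upto_negate_first_mono:
  assumes "1 \<le> k" "Suc k \<le> n"
  shows "measure M {\<omega> \<in> space M. \<bar>max_upto (negate_first X) (Suc k) \<omega>\<bar> \<le> x}
       \<le> measure M {\<omega> \<in> space M. \<bar>max_upto (negate_first X) k \<omega>\<bar> \<le> x}"
proof (cases "0 \<le> x")
  case False
  then have empty: "{\<omega> \<in> space M. \<bar>max_upto (negate_first X) (Suc k) \<omega>\<bar> \<le> x} = {}"
    by auto
  show ?thesis
    unfolding empty by simp
next
  case True
  interpret prob_space M by (rule prob)
  have [measurable]: "max_upto (negate_first X) k \<in> borel_measurable M"
    "negate_first X (Suc k) \<in> borel_measurable M"
    using assms(2) by (auto intro!: max_upto_measurable negate_first_measurable[OF X_meas])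
  have low: "{1..k} = insert 1 {2..k}"
    using assms(1) by auto
  have "{\<omega> \<in> space M. - x \<le> X 1 \<omega> \<and> (\<forall>i\<in>{2..k}. X i \<omega> < - x) \<and> x < X (Suc k) \<omega>}
      \<subseteq> {\<omega> \<in> space M. max_upto (negate_first X) k \<omega> \<le> x \<and> x < negate_first X (Suc k) \<omega>}"
    using True assms(1) unfolding max_upto_def low by (auto simp: negate_first_def)
  then have "measure M {\<omega> \<in> space M. - x \<le> X 1 \<omega> \<and> (\<forall>i\<in>{2..k}. X i \<omega> < - x) \<and> x < X (Suc k) \<omega>}
      \<le> measure M {\<omega> \<in> space M. max_upto (negate_first X) k \<omega> \<le> x \<and> x < negate_first X (Suc k) \<omega>}"
    by (rule finite_measure_mono) measurable
  then show ?thesis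
    using measure_abs_max_upto_negate_first_Suc[OF assms True] by linarith
qed

lemma measure_abs_max2_negate_first:
  assumes "2 \<le> n"
  shows "measure M {\<omega> \<in> space M. \<bar>max (negate_first X 1 \<omega>) (negate_first X 2 \<omega>)\<bar> \<le> x}
       = measure M {\<omega> \<in> space M. \<bar>negate_first X 1 \<omega>\<bar> \<le> x}"
proof (cases "0 \<le> x")
  case False
  then have empty: "{\<omega> \<in> space M. \<bar>max (negate_first X 1 \<omega>) (negate_first X 2 \<omega>)\<bar> \<le> x} = {}"
    "{\<omega> \<in> space M. \<bar>negate_first X 1 \<omega>\<bar> \<le> x} = {}"
    by auto
  show ?thesis
    unfolding empty ..
next
  case True
  have low_high: "{\<omega> \<in> space M. - x \<le> X 1 \<omega> \<and> (\<forall>i\<in>{2..1}. X i \<omega> < - x) \<and> x < X (Suc 1) \<omega>}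
      = {\<omega> \<in> space M. max_upto (negate_first X) 1 \<omega> \<le> x \<and> x < negate_first X (Suc 1) \<omega>}"
    unfolding max_upto_1 by (auto simp: negate_first_def)
  have "Suc 1 \<le> n"
    using assms by simp
  from measure_abs_max_upto_negate_first_Suc[OF order_refl this True, unfolded low_high]
  have "measure M {\<omega> \<in> space M. \<bar>max_upto (negate_first X) (Suc 1) \<omega>\<bar> \<le> x}
      = measure M {\<omega> \<in> space M. \<bar>max_upto (negate_first X) 1 \<omega>\<bar> \<le> x}"
    by linarith
  then show ?thesis
    unfolding Suc_1 max_upto_2 max_upto_1 .
qed

lemma SIAMX_negate_first:
  assumes "2 \<le> n"
  shows "SIAMX M n (negate_first X)"
  unfolding SIAMX_def st_le_def
proof (intro conjI ballI allI)
  interpret prob_space M by (rule prob)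
  have Y1: "negate_first X 1 \<in> borel_measurable M" and Y2: "negate_first X 2 \<in> borel_measurable M"
    using assms by (auto intro!: negate_first_measurable[OF X_meas])
  show "eq_dist M (\<lambda>\<omega>. \<bar>negate_first X 1 \<omega>\<bar>) (\<lambda>\<omega>. \<bar>max (negate_first X 1 \<omega>) (negate_first X 2 \<omega>)\<bar>)"
  proof (rule eq_dist_of_cdf)
    show "(\<lambda>\<omega>. \<bar>negate_first X 1 \<omega>\<bar>) \<in> borel_measurable M"
      using Y1 by (rule borel_measurable_abs)
    show "(\<lambda>\<omega>. \<bar>max (negate_first X 1 \<omega>) (negate_first X 2 \<omega>)\<bar>) \<in> borel_measurable M"
      using Y1 Y2 by (intro borel_measurable_abs borel_measurable_max)
  qed (rule measure_abs_max2_negate_first[OF assms, symmetric])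
next
  fix l x assume "l \<in> {3..n}"
  then obtain k where "l = Suc k" "1 \<le> k" "Suc k \<le> n"
    by (cases l) auto
  then show "measure M {\<omega> \<in> space M. \<bar>max_upto (negate_first X) l \<omega>\<bar> \<le> x}
      \<le> measure M {\<omega> \<in> space M. \<bar>max_upto (negate_first X) (l - 1) \<omega>\<bar> \<le> x}"
    using measure_abs_max_upto_negate_first_mono[of k x] by simp
qed

end

theorem corollary3p11:
  fixes M :: "'a measure" and X :: "nat \<Rightarrow> 'a \<Rightarrow> real" and n :: nat
  assumes "prob_space M"
    and "n \<ge> 2"
    and "\<And>i. i \<in> {1..n} \<Longrightarrow> X i \<in> borel_measurable M"
    and "exchangeable M n X"
  shows "SIAMX M n (\<lambda>i \<omega>. if i = 1 then - X 1 \<omega> else X i \<omega>)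
       \<and> SIAMN M n (\<lambda>i \<omega>. if i = 1 then - X 1 \<omega> else X i \<omega>)"
proof -
  have uminus_meas: "\<And>i. i \<in> {1..n} \<Longrightarrow> (\<lambda>\<omega>. - X i \<omega>) \<in> borel_measurable M"
    using assms(3) by (rule borel_measurable_uminus)
  have "SIAMX M n (negate_first X)"
    using assms(1,3,4,2) by (rule SIAMX_negate_first)
  moreover have "SIAMX M n (negate_first (\<lambda>i \<omega>. - X i \<omega>))"
    using assms(1) uminus_meas exchangeable_uminus[OF assms(4,3)] assms(2) by (rule SIAMX_negate_first)
  then have "SIAMN M n (negate_first X)"
    unfolding SIAMN_iff_SIAMX_uminus negate_first_uminus[symmetric] .
  ultimately show ?thesis
    unfolding negate_first_def by blast
qed

end
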